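(* Let $G$ be a group generated by a finite symmetric set $S$ and let $|\cdot|\colon S\to\{0,1\}$ be a pseudolength on $S$, extended to the word pseudonorm $|g|=\min\{\sum_{i=1}^k|s_i| : g=s_1\cdots s_k,\ s_i\in S\}$ on $G$. If the subgroup $G_0=\langle\{s\in S : |s|=0\}\rangle$ is finite, then for every $n\in\mathbb{N}$ the set $B_{G,S,|\cdot|}(n)=\{g\in G : |g|\le n\}$ is finite, so the function $\gamma_{G,S,|\cdot|}(n)=|B_{G,S,|\cdot|}(n)|$ is well defined, and $\gamma_{G,S,|\cdot|}\sim\gamma_{G,S}$, where $\gamma_{G,S}$ is the usual growth function obtained by giving length $1$ to each generator.
   Context: For non-decreasing $f,g\colon\mathbb{N}\to\mathbb{N}$, write $f\lesssim g$ if there exists $C\in\mathbb{N}_{>0}$ with $f(n)\le g(Cn)$ for all $n\ge1$, and $f\sim g$ if $f\lesssim g$ and $g\lesssim f$. $\gamma_{G,S}(n)$ is the number of elements of $G$ of word length at most $n$ with respect to $S$. *)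

theory Defs
  imports "HOL-Algebra.Generated_Groups"
begin

definition word_prod :: "('a, 'b) monoid_scheme \<Rightarrow> 'a list \<Rightarrow> 'a" where
  "word_prod G ws = foldr (\<lambda>s acc. s \<otimes>\<^bsub>G\<^esub> acc) ws \<one>\<^bsub>G\<^esub>"

definition word_pnorm :: "('a, 'b) monoid_scheme \<Rightarrow> 'a set \<Rightarrow> ('a \<Rightarrow> nat) \<Rightarrow> 'a \<Rightarrow> nat" where
  "word_pnorm G S pl g =
     (LEAST n. \<exists>ws. set ws \<subseteq> S \<and> word_prod G ws = g \<and> sum_list (map pl ws) = n)"

definition pball :: "('a, 'b) monoid_scheme \<Rightarrow> 'a set \<Rightarrow> ('a \<Rightarrow> nat) \<Rightarrow> nat \<Rightarrow> 'a set" where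
  "pball G S pl n = {g \<in> carrier G. word_pnorm G S pl g \<le> n}"

definition pgrowth :: "('a, 'b) monoid_scheme \<Rightarrow> 'a set \<Rightarrow> ('a \<Rightarrow> nat) \<Rightarrow> nat \<Rightarrow> nat" where
  "pgrowth G S pl n = card (pball G S pl n)"

definition growth :: "('a, 'b) monoid_scheme \<Rightarrow> 'a set \<Rightarrow> nat \<Rightarrow> nat" where
  "growth G S = pgrowth G S (\<lambda>_. 1)"

definition dominated :: "(nat \<Rightarrow> nat) \<Rightarrow> (nat \<Rightarrow> nat) \<Rightarrow> bool" where
  "dominated f g \<longleftrightarrow> (\<exists>C::nat. C > 0 \<and> (\<forall>n\<ge>1. f n \<le> g (C * n)))"

definition growth_equiv :: "(nat \<Rightarrow> nat) \<Rightarrow> (nat \<Rightarrow> nat) \<Rightarrow> bool" where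
  "growth_equiv f g \<longleftrightarrow> dominated f g \<and> dominated g f"

end

theory Submission
  imports Defs
begin

text \<open>Let \<open>H\<close> be the finite subgroup generated by the letters of pseudolength \<open>0\<close>, and let \<open>M\<close>
  bound the word length of its elements. Scanning a word from the right, the letters of
  pseudolength \<open>0\<close> can be absorbed into an element of \<open>H\<close>; each letter of positive pseudolength
  forces that element to be written out, costing at most \<open>M + 1\<close> letters. Hence a word of
  pseudolength \<open>n\<close> can be replaced by a word of length at most \<open>M + n (M + 1)\<close>, so the pseudoball
  of radius \<open>n\<close> lies in the ordinary ball of radius \<open>(2M + 1) n\<close>. Conversely, pseudolengths are
  at most \<open>1\<close>, so the ordinary ball of radius \<open>n\<close> lies in the pseudoball of radius \<open>n\<close>.\<close>

lemma word_prod_Nil [simp]: "word_prod G [] = \<one>\<^bsub>G\<^esub>"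
  by (simp add: word_prod_def)

lemma word_prod_Cons [simp]: "word_prod G (s # ws) = s \<otimes>\<^bsub>G\<^esub> word_prod G ws"
  by (simp add: word_prod_def)

lemma (in monoid) word_prod_closed: "set ws \<subseteq> carrier G \<Longrightarrow> word_prod G ws \<in> carrier G"
  by (induction ws) auto

lemma (in monoid) word_prod_append:
  "set xs \<subseteq> carrier G \<Longrightarrow> set ys \<subseteq> carrier G \<Longrightarrow>
   word_prod G (xs @ ys) = word_prod G xs \<otimes> word_prod G ys"
  by (induction xs) (auto simp: m_assoc word_prod_closed)

lemma (in group) generate_imp_word_prod:
  assumes "S \<subseteq> carrier G" "\<forall>s\<in>S. inv s \<in> S" "g \<in> generate G S"
  shows "\<exists>ws. set ws \<subseteq> S \<and> word_prod G ws = g"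
  using assms(3)
proof (induction rule: generate.induct)
  case one
  show ?case by (intro exI[of _ "[]"]) simp
next
  case (incl h)
  then show ?case using assms by (intro exI[of _ "[h]"]) auto
next
  case (inv h)
  then show ?case using assms by (intro exI[of _ "[inv h]"]) auto
next
  case (eng h1 h2)
  then obtain w1 w2 where "set w1 \<subseteq> S" "word_prod G w1 = h1" "set w2 \<subseteq> S" "word_prod G w2 = h2"
    by blast
  then show ?case using assms(1) word_prod_append[of w1 w2]
    by (intro exI[of _ "w1 @ w2"]) auto
qed

lemma finite_word_length_bound:
  assumes "finite A" "\<forall>a\<in>A. \<exists>ws. set ws \<subseteq> S \<and> word_prod G ws = a"
  shows "\<exists>M. \<forall>a\<in>A. \<exists>ws. set ws \<subseteq> S \<and> word_prod G ws = a \<and> length ws \<le> M"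
  using assms
proof (induction A rule: finite_induct)
  case empty
  show ?case by simp
next
  case (insert a A)
  then obtain M where M: "\<forall>b\<in>A. \<exists>ws. set ws \<subseteq> S \<and> word_prod G ws = b \<and> length ws \<le> M"
    by blast
  obtain wa where wa: "set wa \<subseteq> S" "word_prod G wa = a"
    using insert.prems by blast
  show ?case
  proof (intro exI[of _ "max M (length wa)"] ballI)
    fix b assume "b \<in> insert a A"
    then consider "b = a" | "b \<in> A"
      by blast
    then show "\<exists>ws. set ws \<subseteq> S \<and> word_prod G ws = b \<and> length ws \<le> max M (length wa)"
    proof cases
      case 1
      then show ?thesis using wa by (intro exI[of _ wa]) auto
    next
      case 2
      then obtain ws where "set ws \<subseteq> S" "word_prod G ws = b" "length ws \<le> M"
        using M by blast
      then show ?thesis by (intro exI[of _ ws]) auto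
    qed
  qed
qed

definition word_ball :: "('a, 'b) monoid_scheme \<Rightarrow> 'a set \<Rightarrow> ('a \<Rightarrow> nat) \<Rightarrow> nat \<Rightarrow> 'a set" where
  "word_ball G S pl n = word_prod G ` {ws. set ws \<subseteq> S \<and> sum_list (map pl ws) \<le> n}"

lemma word_pnorm_le_iff:
  assumes "\<exists>ws. set ws \<subseteq> S \<and> word_prod G ws = g"
  shows "word_pnorm G S pl g \<le> n \<longleftrightarrow>
     (\<exists>ws. set ws \<subseteq> S \<and> word_prod G ws = g \<and> sum_list (map pl ws) \<le> n)"
proof
  let ?P = "\<lambda>n. \<exists>ws. set ws \<subseteq> S \<and> word_prod G ws = g \<and> sum_list (map pl ws) = n"
  assume "word_pnorm G S pl g \<le> n"
  moreover have "?P (word_pnorm G S pl g)"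
    unfolding word_pnorm_def by (rule LeastI_ex) (use assms in blast)
  ultimately show "\<exists>ws. set ws \<subseteq> S \<and> word_prod G ws = g \<and> sum_list (map pl ws) \<le> n"
    by auto
next
  assume "\<exists>ws. set ws \<subseteq> S \<and> word_prod G ws = g \<and> sum_list (map pl ws) \<le> n"
  then obtain ws where ws: "set ws \<subseteq> S" "word_prod G ws = g" "sum_list (map pl ws) \<le> n"
    by blast
  have "word_pnorm G S pl g \<le> sum_list (map pl ws)"
    unfolding word_pnorm_def by (rule Least_le) (use ws in blast)
  then show "word_pnorm G S pl g \<le> n" using ws by linarith
qed

lemma (in group) pball_eq_word_ball:
  assumes "S \<subseteq> carrier G" "\<forall>s\<in>S. inv s \<in> S" "generate G S = carrier G"
  shows "pball G S pl n = word_ball G S pl n"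
proof -
  have "g \<in> pball G S pl n \<longleftrightarrow> g \<in> word_ball G S pl n" for g
  proof (cases "g \<in> carrier G")
    case True
    then have "\<exists>ws. set ws \<subseteq> S \<and> word_prod G ws = g"
      using generate_imp_word_prod assms by blast
    then have "word_pnorm G S pl g \<le> n \<longleftrightarrow>
        (\<exists>ws. set ws \<subseteq> S \<and> word_prod G ws = g \<and> sum_list (map pl ws) \<le> n)"
      by (rule word_pnorm_le_iff)
    then show ?thesis
      using True unfolding pball_def word_ball_def by auto
  next
    case False
    have "word_prod G ws \<in> carrier G" if "set ws \<subseteq> S" for ws
      using that assms(1) word_prod_closed by blast
    then show ?thesis
      using False unfolding pball_def word_ball_def by auto
  qed
  then show ?thesis by blast
qed

lemma word_ball_mono: "m \<le> n \<Longrightarrow> word_ball G S pl m \<subseteq> word_ball G S pl n"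
  unfolding word_ball_def by fastforce

lemma word_ball_antimono_weight:
  assumes "\<forall>s\<in>S. pl s \<le> pl' s"
  shows "word_ball G S pl' n \<subseteq> word_ball G S pl n"
proof -
  have "sum_list (map pl ws) \<le> sum_list (map pl' ws)" if "set ws \<subseteq> S" for ws
    using assms that by (intro sum_list_mono) auto
  then have "{ws. set ws \<subseteq> S \<and> sum_list (map pl' ws) \<le> n}
      \<subseteq> {ws. set ws \<subseteq> S \<and> sum_list (map pl ws) \<le> n}"
    by (auto intro: le_trans)
  then show ?thesis
    unfolding word_ball_def by (rule image_mono)
qed

lemma word_ball_one_eq: "word_ball G S (\<lambda>_. 1) n = word_prod G ` {ws. set ws \<subseteq> S \<and> length ws \<le> n}"
  by (simp add: word_ball_def sum_list_triv)

lemma finite_word_ball_one: "finite S \<Longrightarrow> finite (word_ball G S (\<lambda>_. 1) n)"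
  unfolding word_ball_one_eq using finite_lists_length_le by blast

lemma (in group) word_prod_factor_through_subgroup:
  assumes "subgroup H G" "S \<subseteq> carrier G"
    and "\<forall>s\<in>S. pl s = 0 \<longrightarrow> s \<in> H"
    and "\<forall>h\<in>H. \<exists>ws. set ws \<subseteq> S \<and> word_prod G ws = h \<and> length ws \<le> M"
    and "set ws \<subseteq> S"
  shows "\<exists>h u. h \<in> H \<and> set u \<subseteq> S \<and> word_prod G ws = h \<otimes> word_prod G u
           \<and> length u \<le> (M + 1) * sum_list (map pl ws)"
  using assms(5)
proof (induction ws)
  case Nil
  show ?case using subgroup.one_closed[OF assms(1)] by (intro exI[of _ \<one>] exI[of _ "[]"]) auto
next
  case (Cons s ws)
  then obtain h u where hu: "h \<in> H" "set u \<subseteq> S" "word_prod G ws = h \<otimes> word_prod G u"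
      "length u \<le> (M + 1) * sum_list (map pl ws)"
    by auto
  have s: "s \<in> S" "s \<in> carrier G"
    using Cons.prems assms(2) by auto
  have h: "h \<in> carrier G"
    using hu(1) subgroup.subset[OF assms(1)] by blast
  have u: "set u \<subseteq> carrier G" "word_prod G u \<in> carrier G"
    using hu(2) assms(2) word_prod_closed by auto
  show ?case
  proof (cases "pl s = 0")
    case True
    then have "s \<otimes> h \<in> H"
      using s hu(1) assms(3) subgroup.m_closed[OF assms(1)] by blast
    then show ?thesis
      using hu s h u True by (intro exI[of _ "s \<otimes> h"] exI[of _ u]) (auto simp: m_assoc)
  next
    case False
    obtain v where v: "set v \<subseteq> S" "word_prod G v = h" "length v \<le> M"
      using assms(4) hu(1) by blast
    have "word_prod G (s # v @ u) = s \<otimes> (h \<otimes> word_prod G u)"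
      using word_prod_append[of v u] v u assms(2) by auto
    moreover have "length (s # v @ u) \<le> (M + 1) * sum_list (map pl (s # ws))"
    proof -
      have "M + 1 \<le> (M + 1) * pl s"
        using False mult_le_mono2[of 1 "pl s" "M + 1"] by simp
      then show ?thesis
        using hu(4) v(3) by (simp add: add_mult_distrib2)
    qed
    ultimately show ?thesis
      using subgroup.one_closed[OF assms(1)] hu s h u v
      by (intro exI[of _ \<one>] exI[of _ "s # v @ u"]) (auto simp: m_assoc)
  qed
qed

lemma (in group) word_ball_subset_word_ball_one:
  assumes "subgroup H G" "S \<subseteq> carrier G"
    and "\<forall>s\<in>S. pl s = 0 \<longrightarrow> s \<in> H"
    and "\<forall>h\<in>H. \<exists>ws. set ws \<subseteq> S \<and> word_prod G ws = h \<and> length ws \<le> M"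
  shows "word_ball G S pl n \<subseteq> word_ball G S (\<lambda>_. 1) (M + (M + 1) * n)"
proof
  fix g assume "g \<in> word_ball G S pl n"
  then obtain ws where ws: "set ws \<subseteq> S" "word_prod G ws = g" "sum_list (map pl ws) \<le> n"
    unfolding word_ball_def by auto
  obtain h u where hu: "h \<in> H" "set u \<subseteq> S" "g = h \<otimes> word_prod G u"
      "length u \<le> (M + 1) * sum_list (map pl ws)"
    using word_prod_factor_through_subgroup[OF assms ws(1)] ws(2) by auto
  obtain v where v: "set v \<subseteq> S" "word_prod G v = h" "length v \<le> M"
    using assms(4) hu(1) by blast
  have "word_prod G (v @ u) = g"
    using word_prod_append[of v u] v hu assms(2) by auto
  moreover have "length (v @ u) \<le> M + (M + 1) * n"
    using hu(4) v(3) mult_le_mono2[OF ws(3), of "M + 1"] by simp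
  ultimately show "g \<in> word_ball G S (\<lambda>_. 1) (M + (M + 1) * n)"
    using v(1) hu(2) unfolding word_ball_one_eq by (auto intro: rev_image_eqI)
qed

lemma dominated_card_if_subset_affine:
  assumes "\<And>n. A n \<subseteq> B (a + b * n)" "\<And>m n. m \<le> n \<Longrightarrow> B m \<subseteq> B n" "\<And>n. finite (B n)"
  shows "dominated (\<lambda>n. card (A n)) (\<lambda>n. card (B n))"
  unfolding dominated_def
proof (intro exI[of _ "a + b + 1"] conjI allI impI)
  fix n :: nat assume "n \<ge> 1"
  then have "a * 1 \<le> a * n"
    by (rule mult_le_mono2)
  moreover have "(a + b + 1) * n = a * n + b * n + n"
    by (simp add: algebra_simps)
  ultimately have "a + b * n \<le> (a + b + 1) * n"
    by linarith
  then show "card (A n) \<le> card (B ((a + b + 1) * n))"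
    using assms by (meson card_mono subset_trans)
qed simp

theorem mainTheorem6:
  fixes G :: "('a, 'b) monoid_scheme" and S :: "'a set" and pl :: "'a \<Rightarrow> nat"
  assumes "group G"
    and "finite S" and "S \<subseteq> carrier G"
    and "\<forall>s\<in>S. inv\<^bsub>G\<^esub> s \<in> S"
    and "generate G S = carrier G"
    and "\<forall>s\<in>S. pl s \<in> {0, 1}"
    and "finite (generate G {s \<in> S. pl s = 0})"
  shows "(\<forall>n. finite (pball G S pl n)) \<and> growth_equiv (pgrowth G S pl) (growth G S)"
proof -
  interpret group G by fact
  let ?H = "generate G {s \<in> S. pl s = 0}"
  have "\<forall>h\<in>?H. \<exists>ws. set ws \<subseteq> S \<and> word_prod G ws = h"
    using generate_imp_word_prod[OF assms(3,4)] mono_generate[of "{s \<in> S. pl s = 0}" S] by blast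
  then obtain M where M: "\<forall>h\<in>?H. \<exists>ws. set ws \<subseteq> S \<and> word_prod G ws = h \<and> length ws \<le> M"
    using finite_word_length_bound[OF assms(7)] by blast
  have upper: "word_ball G S pl n \<subseteq> word_ball G S (\<lambda>_. 1) (M + (M + 1) * n)" for n
  proof (rule word_ball_subset_word_ball_one[OF _ assms(3) _ M])
    show "subgroup ?H G"
      by (rule generate_is_subgroup) (use assms(3) in auto)
    show "\<forall>s\<in>S. pl s = 0 \<longrightarrow> s \<in> ?H"
      by (auto intro: generate.incl)
  qed
  have lower: "word_ball G S (\<lambda>_. 1) n \<subseteq> word_ball G S pl n" for n
    by (rule word_ball_antimono_weight) (use assms(6) in auto)
  have balls: "pball G S pl' n = word_ball G S pl' n" for pl' n
    using pball_eq_word_ball assms(3-5) by blast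
  have "finite (word_ball G S pl n)" for n
    using finite_subset[OF upper finite_word_ball_one[OF assms(2)]] .
  moreover have "dominated (\<lambda>n. card (word_ball G S pl n)) (\<lambda>n. card (word_ball G S (\<lambda>_. 1) n))"
    by (rule dominated_card_if_subset_affine[where a = M and b = "M + 1"])
      (fact upper, fact word_ball_mono, use finite_word_ball_one[OF assms(2)] in simp)
  moreover have "dominated (\<lambda>n. card (word_ball G S (\<lambda>_. 1) n)) (\<lambda>n. card (word_ball G S pl n))"
    by (rule dominated_card_if_subset_affine[where a = 0 and b = 1])
      (use lower in simp, fact word_ball_mono, fact calculation(1))
  ultimately show ?thesis
    unfolding growth_equiv_def pgrowth_def growth_def balls by blast
qed

end
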